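(* Fix a function $b:\mathbb{R}^d\to\mathbb{R}^+$, and for $u\in\mathbb{R}^d$ define $a_u:\mathbb{R}^d\to\mathbb{R}$ by $a_u(x)=b(u)\cdot(u\cdot x)$. The pseudo-dimension of $\{a_u: u\in B(1)\}$ is $O(d)$.
   Context: $B(1)=\{u\in\mathbb{R}^d:\|u\|_2\le1\}$. For a set $A$ of real-valued functions on a common domain $X$, its pseudo-dimension is the VC-dimension of the set of indicator functions $\{(x,y)\mapsto \mathbf{1}[a(x)\ge y]: a\in A\}$ on $X\times\mathbb{R}$. *)

theory Defs
  imports Complex_Main "HOL-Library.Extended_Nat"
begin

text \<open>R^d, with d varying inside the statement, is represented by functions
  nat => real vanishing at all indices >= d.\<close>
definition Rd :: "nat \<Rightarrow> (nat \<Rightarrow> real) set" where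
  "Rd d = {x. \<forall>i\<ge>d. x i = 0}"

definition dotd :: "nat \<Rightarrow> (nat \<Rightarrow> real) \<Rightarrow> (nat \<Rightarrow> real) \<Rightarrow> real" where
  "dotd d u x = (\<Sum>i<d. u i * x i)"

definition unit_ball_d :: "nat \<Rightarrow> (nat \<Rightarrow> real) set" where
  "unit_ball_d d = {u \<in> Rd d. sqrt (\<Sum>i<d. (u i)\<^sup>2) \<le> 1}"

definition shatters :: "('a \<Rightarrow> bool) set \<Rightarrow> 'a set \<Rightarrow> bool" where
  "shatters H S \<longleftrightarrow> (\<forall>T\<subseteq>S. \<exists>h\<in>H. \<forall>z\<in>S. h z \<longleftrightarrow> z \<in> T)"

definition VC_dim :: "'a set \<Rightarrow> ('a \<Rightarrow> bool) set \<Rightarrow> enat" where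
  "VC_dim Z H = Sup {enat (card S) | S. finite S \<and> S \<subseteq> Z \<and> shatters H S}"

definition pseudo_dim :: "'a set \<Rightarrow> ('a \<Rightarrow> real) set \<Rightarrow> enat" where
  "pseudo_dim X A = VC_dim (X \<times> (UNIV :: real set)) ((\<lambda>a. \<lambda>(x, y). a x \<ge> y) ` A)"

end

theory Submission
  imports Defs "HOL-Library.Function_Algebras"
begin

text \<open>Every \<open>a\<^sub>u\<close> is the linear functional \<open>x \<mapsto> (b(u) u) \<cdot> x\<close>, so it suffices to bound the
  pseudo-dimension of all linear functionals on \<open>\<real>\<^sup>d\<close> by \<open>d + 1\<close>. Lifting \<open>(x, y)\<close> to
  \<open>(x, y) \<in> \<real>\<^sup>d\<^sup>+\<^sup>1\<close> turns the subgraph indicators \<open>y \<le> w \<cdot> x\<close> into homogeneous halfspaces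
  \<open>0 \<le> (w, -1) \<cdot> z\<close>. More than \<open>n\<close> points of \<open>\<real>\<^sup>n\<close> satisfy a nontrivial linear relation
  \<open>\<Sum> c\<^sub>v v = 0\<close> with some \<open>c\<^sub>v < 0\<close>; a halfspace containing exactly the points with
  \<open>c\<^sub>v > 0\<close> would make \<open>\<Sum> c\<^sub>v (w \<cdot> v)\<close> strictly positive, although it equals \<open>w \<cdot> 0 = 0\<close>.\<close>

lemma shatters_mono: "shatters H S \<Longrightarrow> H \<subseteq> H' \<Longrightarrow> shatters H' S"
  unfolding shatters_def by (meson subsetD)

lemma shatters_image:
  assumes "shatters H S" and "\<And>h. h \<in> H \<Longrightarrow> \<exists>g\<in>G. \<forall>z\<in>S. h z = g (f z)"
  shows "shatters G (f ` S)"
  unfolding shatters_def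
proof (intro allI impI)
  fix T assume "T \<subseteq> f ` S"
  have "S \<inter> f -` T \<subseteq> S" by (rule Int_lower1)
  with \<open>shatters H S\<close> obtain h where "h \<in> H" and h: "\<forall>z\<in>S. h z \<longleftrightarrow> z \<in> S \<inter> f -` T"
    unfolding shatters_def by (elim allE impE bexE)
  then obtain g where "g \<in> G" and "\<forall>z\<in>S. h z = g (f z)"
    using assms(2)[OF \<open>h \<in> H\<close>] by (elim bexE)
  with h have "\<forall>z\<in>S. g (f z) \<longleftrightarrow> f z \<in> T"
    by simp
  with \<open>g \<in> G\<close> show "\<exists>g\<in>G. \<forall>z\<in>f ` S. g z \<longleftrightarrow> z \<in> T"
    by auto
qed

lemma VC_dim_mono:
  assumes "H \<subseteq> H'"
  shows "VC_dim Z H \<le> VC_dim Z H'"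
proof -
  have "{enat (card S) | S. finite S \<and> S \<subseteq> Z \<and> shatters H S}
    \<subseteq> {enat (card S) | S. finite S \<and> S \<subseteq> Z \<and> shatters H' S}"
    using shatters_mono[OF _ assms] by blast
  then show ?thesis
    unfolding VC_dim_def by (rule Sup_subset_mono)
qed

lemma VC_dim_le:
  assumes "\<And>S. finite S \<Longrightarrow> S \<subseteq> Z \<Longrightarrow> shatters H S \<Longrightarrow> card S \<le> k"
  shows "VC_dim Z H \<le> enat k"
  unfolding VC_dim_def
proof (rule Sup_least)
  fix m assume "m \<in> {enat (card S) | S. finite S \<and> S \<subseteq> Z \<and> shatters H S}"
  then show "m \<le> enat k"
    using assms by auto
qed

lemma pseudo_dim_mono: "A \<subseteq> B \<Longrightarrow> pseudo_dim X A \<le> pseudo_dim X B"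
  unfolding pseudo_dim_def by (intro VC_dim_mono image_mono)

lemma sum_fun_apply: "(\<Sum>a\<in>A. f a) x = (\<Sum>a\<in>A. f a x)"
  by (induction A rule: infinite_finite_induct) auto

lemma Rd_linear_dependence:
  assumes "finite V" and "V \<subseteq> Rd n" and "n < card V"
  obtains c where "\<exists>v\<in>V. c v \<noteq> 0" and "\<And>i. (\<Sum>v\<in>V. c v * v i) = 0"
proof -
  define scale where "scale c f = (\<lambda>i::nat. c * f i :: real)" for c :: real and f
  interpret pointwise: vector_space scale
    by unfold_locales (auto simp: scale_def algebra_simps)
  define e where "e k = (\<lambda>i::nat. if i = k then 1 else 0 :: real)" for k :: nat
  have "v \<in> pointwise.span (e ` {..<n})" if "v \<in> V" for v
  proof -
    have "v = (\<Sum>k<n. scale (v k) (e k))"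
    proof
      fix i
      have "(\<Sum>k<n. v k * e k i) = (\<Sum>k<n. if k = i then v i else 0)"
        by (rule sum.cong) (auto simp: e_def)
      also have "\<dots> = v i"
        using that \<open>V \<subseteq> Rd n\<close> by (auto simp: Rd_def)
      finally show "v i = (\<Sum>k<n. scale (v k) (e k)) i"
        by (simp add: sum_fun_apply scale_def)
    qed
    also have "\<dots> \<in> pointwise.span (e ` {..<n})"
      by (intro pointwise.span_sum pointwise.span_scale pointwise.span_base) simp
    finally show ?thesis .
  qed
  then have span: "V \<subseteq> pointwise.span (e ` {..<n})" ..
  have "pointwise.dependent V"
  proof (rule ccontr)
    assume "\<not> pointwise.dependent V"
    then have "card V \<le> card (e ` {..<n})"
      using pointwise.independent_span_bound[OF finite_imageI[OF finite_lessThan] _ span] by blast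
    also have "\<dots> \<le> n"
      using card_image_le[of "{..<n}" e] by simp
    finally show False
      using \<open>n < card V\<close> by simp
  qed
  then obtain c where "\<exists>v\<in>V. c v \<noteq> 0" and combination: "(\<Sum>v\<in>V. scale (c v) v) = 0"
    using pointwise.dependent_finite[OF \<open>finite V\<close>] by blast
  moreover have "(\<Sum>v\<in>V. c v * v i) = 0" for i
    using fun_cong[OF combination, of i] by (simp add: sum_fun_apply scale_def)
  ultimately show thesis
    using that by blast
qed

definition halfspaces :: "nat \<Rightarrow> ((nat \<Rightarrow> real) \<Rightarrow> bool) set" where
  "halfspaces n = range (\<lambda>w v. 0 \<le> dotd n w v)"

lemma sum_scaled_dotd: "(\<Sum>v\<in>V. c v * dotd n w v) = dotd n w (\<lambda>i. \<Sum>v\<in>V. c v * v i)"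
  unfolding dotd_def sum_distrib_left by (subst sum.swap) (simp add: algebra_simps)

lemma halfspace_not_positive_part_of_relation:
  assumes "finite V" and relation: "\<And>i. (\<Sum>v\<in>V. c v * v i) = 0"
    and "v\<^sub>0 \<in> V" and "c v\<^sub>0 < 0"
  shows "\<not> (\<forall>v\<in>V. 0 \<le> dotd n w v \<longleftrightarrow> 0 < c v)"
proof
  assume "\<forall>v\<in>V. 0 \<le> dotd n w v \<longleftrightarrow> 0 < c v"
  then have sign: "0 \<le> dotd n w v \<longleftrightarrow> 0 < c v" if "v \<in> V" for v
    using that by (rule bspec)
  have "0 < (\<Sum>v\<in>V. c v * dotd n w v)"
  proof (rule sum_pos2[OF \<open>finite V\<close> \<open>v\<^sub>0 \<in> V\<close>])
    have "dotd n w v\<^sub>0 < 0"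
      using sign[OF \<open>v\<^sub>0 \<in> V\<close>] \<open>c v\<^sub>0 < 0\<close> by linarith
    then show "0 < c v\<^sub>0 * dotd n w v\<^sub>0"
      using \<open>c v\<^sub>0 < 0\<close> by (rule mult_neg_neg[rotated])
    show "0 \<le> c v * dotd n w v" if "v \<in> V" for v
      using sign[OF that] by (cases "0 < c v") (simp_all add: mult_nonpos_nonpos)
  qed
  also have "\<dots> = 0"
    unfolding sum_scaled_dotd relation by (simp add: dotd_def)
  finally show False by simp
qed

lemma card_shattered_by_halfspaces_le:
  assumes "finite V" and "V \<subseteq> Rd n" and "shatters (halfspaces n) V"
  shows "card V \<le> n"
proof (rule ccontr)
  assume "\<not> card V \<le> n"
  then have "n < card V" by simp
  obtain c v\<^sub>0 where relation: "\<And>i. (\<Sum>v\<in>V. c v * v i) = 0" and "v\<^sub>0 \<in> V" "c v\<^sub>0 < 0"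
  proof -
    obtain c where "\<exists>v\<in>V. c v \<noteq> 0" and relation: "\<And>i. (\<Sum>v\<in>V. c v * v i) = 0"
      using Rd_linear_dependence[OF \<open>finite V\<close> \<open>V \<subseteq> Rd n\<close> \<open>n < card V\<close>] by blast
    then obtain v\<^sub>0 where "v\<^sub>0 \<in> V" and "c v\<^sub>0 \<noteq> 0" by blast
    show thesis
    proof (cases "c v\<^sub>0 < 0")
      case True
      with relation \<open>v\<^sub>0 \<in> V\<close> show thesis by (rule that)
    next
      case False
      with \<open>c v\<^sub>0 \<noteq> 0\<close> have "- c v\<^sub>0 < 0" by simp
      moreover have "(\<Sum>v\<in>V. - c v * v i) = 0" for i
        using relation[of i] by (simp add: sum_negf)
      ultimately show thesis
        using \<open>v\<^sub>0 \<in> V\<close> by (intro that)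
    qed
  qed
  have "{v\<in>V. 0 < c v} \<subseteq> V" by blast
  with \<open>shatters (halfspaces n) V\<close> obtain h
    where "h \<in> halfspaces n" and h: "\<forall>v\<in>V. h v \<longleftrightarrow> v \<in> {v\<in>V. 0 < c v}"
    unfolding shatters_def by (elim allE impE bexE)
  then obtain w where "h = (\<lambda>v. 0 \<le> dotd n w v)"
    unfolding halfspaces_def by blast
  with h have "\<forall>v\<in>V. 0 \<le> dotd n w v \<longleftrightarrow> 0 < c v"
    by simp
  with halfspace_not_positive_part_of_relation[OF \<open>finite V\<close> relation \<open>v\<^sub>0 \<in> V\<close> \<open>c v\<^sub>0 < 0\<close>]
  show False ..
qed

lemma dotd_Suc_fun_upd: "dotd (Suc d) (w(d := a)) (x(d := y)) = dotd d w x + a * y"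
proof -
  have "(\<Sum>i<d. (w(d := a)) i * (x(d := y)) i) = (\<Sum>i<d. w i * x i)"
    by (rule sum.cong) auto
  then show ?thesis
    unfolding dotd_def by simp
qed

lemma inj_on_fun_upd_Rd: "inj_on (\<lambda>(x, y). x(d := y)) (Rd d \<times> UNIV)"
proof (rule inj_onI, clarify)
  fix x y x' y' assume "x \<in> Rd d" "x' \<in> Rd d" and lift_eq: "x(d := y) = x'(d := y')"
  have "x i = x' i" for i
    using fun_cong[OF lift_eq, of i] \<open>x \<in> Rd d\<close> \<open>x' \<in> Rd d\<close>
    by (cases "i = d") (simp_all add: Rd_def)
  moreover have "y = y'"
    using fun_cong[OF lift_eq, of d] by simp
  ultimately show "x = x' \<and> y = y'"
    by auto
qed

lemma pseudo_dim_linear_le: "pseudo_dim (Rd d) (range (dotd d)) \<le> enat (Suc d)"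
  unfolding pseudo_dim_def
proof (rule VC_dim_le)
  let ?lift = "\<lambda>(x :: nat \<Rightarrow> real, y :: real). x(d := y)"
  fix S assume "finite S" and S: "S \<subseteq> Rd d \<times> UNIV"
    and "shatters ((\<lambda>a (x, y). y \<le> a x) ` range (dotd d)) S"
  moreover have "\<exists>g\<in>halfspaces (Suc d). \<forall>z\<in>S. h z = g (?lift z)"
    if "h \<in> (\<lambda>a (x, y). y \<le> a x) ` range (dotd d)" for h
  proof -
    from that obtain a where h: "h = (\<lambda>(x, y). y \<le> a x)" and "a \<in> range (dotd d)"
      by (rule imageE)
    from \<open>a \<in> range (dotd d)\<close> obtain w where "a = dotd d w"
      by (rule rangeE)
    have "h z = (0 \<le> dotd (Suc d) (w(d := -1)) (?lift z))" for z
    proof (cases z)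
      case (Pair x y)
      then show ?thesis
        using h \<open>a = dotd d w\<close> by (simp add: dotd_Suc_fun_upd)
    qed
    moreover have "(\<lambda>v. 0 \<le> dotd (Suc d) (w(d := -1)) v) \<in> halfspaces (Suc d)"
      unfolding halfspaces_def by (rule rangeI)
    ultimately show ?thesis
      by auto
  qed
  ultimately have "shatters (halfspaces (Suc d)) (?lift ` S)"
    by (intro shatters_image)
  moreover have "?lift ` S \<subseteq> Rd (Suc d)"
    using S by (auto simp: Rd_def)
  ultimately have "card (?lift ` S) \<le> Suc d"
    using \<open>finite S\<close> by (intro card_shattered_by_halfspaces_le) auto
  moreover have "inj_on ?lift S"
    using inj_on_subset[OF inj_on_fun_upd_Rd S] .
  ultimately show "card S \<le> Suc d"
    by (simp add: card_image)
qed

theorem lemma10: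
  shows "\<exists>C::nat. \<forall>d::nat. d \<ge> 1 \<longrightarrow>
    (\<forall>b :: (nat \<Rightarrow> real) \<Rightarrow> real. (\<forall>u\<in>Rd d. b u > 0) \<longrightarrow>
      pseudo_dim (Rd d) ((\<lambda>u. \<lambda>x. b u * dotd d u x) ` unit_ball_d d) \<le> enat (C * d))"
proof (intro exI[of _ 2] allI impI)
  fix d :: nat and b :: "(nat \<Rightarrow> real) \<Rightarrow> real"
  assume "d \<ge> 1"
  have "(\<lambda>x. b u * dotd d u x) = dotd d (\<lambda>i. b u * u i)" for u
    unfolding dotd_def by (simp add: sum_distrib_left mult.assoc)
  then have "(\<lambda>u x. b u * dotd d u x) ` unit_ball_d d \<subseteq> range (dotd d)"
    by (simp add: image_subsetI)
  then have "pseudo_dim (Rd d) ((\<lambda>u x. b u * dotd d u x) ` unit_ball_d d) \<le> enat (Suc d)"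
    by (rule order_trans[OF pseudo_dim_mono pseudo_dim_linear_le])
  also have "\<dots> \<le> enat (2 * d)"
    using \<open>d \<ge> 1\<close> by simp
  finally show "pseudo_dim (Rd d) ((\<lambda>u x. b u * dotd d u x) ` unit_ball_d d) \<le> enat (2 * d)" .
qed

end
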